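(* Let $\mu \in \mathbb{R}$ and $\sigma > 0$. Let $\mathcal{V}$ be a finite set of nodes partitioned into two non-empty disjoint classes $\mathcal{C}_0, \mathcal{C}_1$ with $\mathcal{C}_0 \cup \mathcal{C}_1 = \mathcal{V}$ and $|\mathcal{C}_0| = |\mathcal{C}_1|$. Each node $v_i$ has a scalar feature $x_i$, the features being independent with $x_i \sim \mathcal{N}(\mu, \sigma^2)$ if $v_i \in \mathcal{C}_0$ and $x_i \sim \mathcal{N}(-\mu, \sigma^2)$ if $v_i \in \mathcal{C}_1$. Let $n \geq 1$ and $0 \le n_0 \le n$ be integers, and suppose every node $v_i$ has a set of neighbors $N(v_i) \subseteq \mathcal{V}\setminus\{v_i\}$ with $|N(v_i)| = n$, of which exactly $n_0$ belong to the same class as $v_i$ and $n_1 = n - n_0$ belong to the other class. For $w \in [0,1]$ define the embedding $$z_i = (1-w)x_i + \frac{w}{n}\sum_{v_j \in N(v_i)} x_j .$$ Define $\texttt{CS}(z;n,n_0,w)$ as the probability that the Bayes-optimal classifier (with equal class priors $1/2$) that predicts the class of $v_i$ from $z_i$ predicts it correctly, i.e., one minus the Bayes error rate. Define $\texttt{LCS}(z;n,n_0,w)$ as $$\frac{\big(\mathbb{E}[z_i \mid v_i \in \mathcal{C}_0] - \mathbb{E}[z_i \mid v_i \in \mathcal{C}_1]\big)^2}{\tfrac{1}{2}\Big(\mathbb{E}\big[(z_i - \mathbb{E}[z_i\mid v_i\in\mathcal{C}_0])^2 \mid v_i \in \mathcal{C}_0\big] + \mathbb{E}\big[(z_i - \mathbb{E}[z_i\mid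 v_i\in\mathcal{C}_1])^2 \mid v_i \in \mathcal{C}_1\big]\Big)},$$ where expectations are over the random features. Let $w, w' \in [0,1]$. If $n_0 = n$, or if $w, w' \in \left[\max\!\left(\frac{n-2n_0}{2n-2n_0}, 0\right), 1\right]$, then $$\texttt{CS}(z;n,n_0,w) > \texttt{CS}(z;n,n_0,w') \iff \texttt{LCS}(z;n,n_0,w) > \texttt{LCS}(z;n,n_0,w').$$
   Context: $\texttt{CS}$ ("class separability") and $\texttt{LCS}$ ("latent-class separability", an extension of the Calinski–Harabasz index) are as defined in the claim; $w$ is the degree of graph convolution usage. The expectations and the Bayes classifier are taken with respect to the random node features, with the graph structure (neighbor counts $n$, $n_0$) fixed. *)

theory Defs
  imports "HOL-Probability.Probability"
begin

definition embed :: "('v \<Rightarrow> 'a \<Rightarrow> real) \<Rightarrow> ('v \<Rightarrow> 'v set) \<Rightarrow> nat \<Rightarrow> real \<Rightarrow> 'v \<Rightarrow> 'a \<Rightarrow> real" where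
  "embed X N n w i \<omega> = (1 - w) * X i \<omega> + (w / real n) * (\<Sum>j\<in>N i. X j \<omega>)"

definition cond_prob :: "'a measure \<Rightarrow> ('v \<Rightarrow> 'a \<Rightarrow> real) \<Rightarrow> 'v set \<Rightarrow> real set \<Rightarrow> real" where
  "cond_prob M Z C A = (1 / real (card C)) * (\<Sum>i\<in>C. measure M {\<omega> \<in> space M. Z i \<omega> \<in> A})"

definition cond_exp :: "'a measure \<Rightarrow> ('v \<Rightarrow> 'a \<Rightarrow> real) \<Rightarrow> 'v set \<Rightarrow> (real \<Rightarrow> real) \<Rightarrow> real" where
  "cond_exp M Z C g = (1 / real (card C)) * (\<Sum>i\<in>C. integral\<^sup>L M (\<lambda>\<omega>. g (Z i \<omega>)))"

text \<open>CS: accuracy of the Bayes-optimal classifier with equal priors 1/2, i.e. the supremum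
  over all (Borel) decision rules "predict C0 iff z in A" of the probability of a correct
  prediction (= one minus the Bayes error rate).\<close>
definition CS :: "'a measure \<Rightarrow> ('v \<Rightarrow> 'a \<Rightarrow> real) \<Rightarrow> ('v \<Rightarrow> 'v set) \<Rightarrow> 'v set \<Rightarrow> 'v set \<Rightarrow> nat \<Rightarrow> real \<Rightarrow> real" where
  "CS M X N C0 C1 n w =
     (SUP A \<in> sets borel. (1/2) * cond_prob M (embed X N n w) C0 A
                        + (1/2) * (1 - cond_prob M (embed X N n w) C1 A))"

definition LCS :: "'a measure \<Rightarrow> ('v \<Rightarrow> 'a \<Rightarrow> real) \<Rightarrow> ('v \<Rightarrow> 'v set) \<Rightarrow> 'v set \<Rightarrow> 'v set \<Rightarrow> nat \<Rightarrow> real \<Rightarrow> real" where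
  "LCS M X N C0 C1 n w =
     (let Z = embed X N n w;
          m0 = cond_exp M Z C0 (\<lambda>z. z);
          m1 = cond_exp M Z C1 (\<lambda>z. z)
      in (m0 - m1)\<^sup>2 /
         ((1/2) * (cond_exp M Z C0 (\<lambda>z. (z - m0)\<^sup>2) + cond_exp M Z C1 (\<lambda>z. (z - m1)\<^sup>2))))"

end

theory Submission
  imports Defs
begin

text \<open>Each embedding z_i is a weighted sum of independent Gaussian features, hence itself Gaussian
  with standard deviation s_w = sigma sqrt((1 - w)^2 + w^2/n) and mean m_w or -m_w according to the
  class of v_i, where m_w = mu ((1 - w) + w (2 n0 - n)/n). For two Gaussians of equal variance and
  opposite means the likelihood ratio test thresholds at 0, so CS = 1/2 + 1/2 P(|Y| < |m_w|/s_w)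
  for a standard normal Y, while LCS = 4 (m_w/s_w)^2. Both are strictly increasing functions of
  the signal-to-noise ratio |m_w|/s_w, so they order any two w, w' in the same way.\<close>

definition normal_measure :: "real \<Rightarrow> real \<Rightarrow> real measure" where
  "normal_measure \<mu> \<sigma> = density lborel (\<lambda>x. ennreal (normal_density \<mu> \<sigma> x))"

lemma sets_normal_measure [simp]: "sets (normal_measure \<mu> \<sigma>) = sets borel"
  by (simp add: normal_measure_def)

lemma space_normal_measure [simp]: "space (normal_measure \<mu> \<sigma>) = UNIV"
  by (simp add: normal_measure_def)

lemma prob_space_normal_measure: "\<sigma> > 0 \<Longrightarrow> prob_space (normal_measure \<mu> \<sigma>)"
  unfolding normal_measure_def by (rule prob_space_normal_density)

lemma emeasure_normal_measure:
  "A \<in> sets borel \<Longrightarrow>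
    emeasure (normal_measure \<mu> \<sigma>) A = (\<integral>\<^sup>+ x. ennreal (normal_density \<mu> \<sigma> x) * indicator A x \<partial>lborel)"
  by (simp add: normal_measure_def emeasure_density)

lemma measure_normal_measure_affine:
  assumes "\<sigma> > 0" "A \<in> sets borel"
  shows "measure (normal_measure \<mu> \<sigma>) A = measure (normal_measure 0 1) {y. \<mu> + \<sigma> * y \<in> A}"
proof -
  have dens: "ennreal \<bar>\<sigma>\<bar> * (ennreal (normal_density \<mu> \<sigma> (\<mu> + \<sigma> * y)) * indicator A (\<mu> + \<sigma> * y))
      = ennreal (normal_density 0 1 y) * indicator {y. \<mu> + \<sigma> * y \<in> A} y" for y
  proof -
    have "\<sigma> * normal_density \<mu> \<sigma> (\<mu> + \<sigma> * y) = normal_density 0 1 y"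
      using assms(1) by (simp add: normal_density_def real_sqrt_mult power_mult_distrib field_simps)
    then show ?thesis
      using assms(1) by (simp add: indicator_def ennreal_mult[symmetric] mult.assoc[symmetric] del: ennreal_mult)
  qed
  have "emeasure (normal_measure \<mu> \<sigma>) A
      = ennreal \<bar>\<sigma>\<bar> * (\<integral>\<^sup>+ y. ennreal (normal_density \<mu> \<sigma> (\<mu> + \<sigma> * y)) * indicator A (\<mu> + \<sigma> * y) \<partial>lborel)"
    unfolding emeasure_normal_measure[OF assms(2)]
    using assms by (subst nn_integral_real_affine[where c=\<sigma> and t=\<mu>]) auto
  also have "\<dots> = (\<integral>\<^sup>+ y. ennreal (normal_density 0 1 y) * indicator {y. \<mu> + \<sigma> * y \<in> A} y \<partial>lborel)"
    using assms(2) by (subst nn_integral_cmult[symmetric]) (auto simp: dens)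
  also have "\<dots> = emeasure (normal_measure 0 1) {y. \<mu> + \<sigma> * y \<in> A}"
    using assms(2) by (simp add: emeasure_normal_measure)
  finally show ?thesis
    by (simp add: measure_def)
qed

lemma measure_normal_measure_interval_pos:
  assumes "\<sigma> > 0" "a < b"
  shows "measure (normal_measure \<mu> \<sigma>) {a<..b} > 0"
proof -
  interpret P: prob_space "normal_measure \<mu> \<sigma>"
    using assms(1) by (rule prob_space_normal_measure)
  have "\<not> (AE x in lborel. x \<in> {a<..b} \<longrightarrow> normal_density \<mu> \<sigma> x = 0)"
  proof
    assume "AE x in lborel. x \<in> {a<..b} \<longrightarrow> normal_density \<mu> \<sigma> x = 0"
    then have "AE x in lborel. x \<notin> {a<..b}"
      by eventually_elim (metis normal_density_pos[OF assms(1)] order_less_irrefl)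
    then have "{a<..b} \<in> null_sets lborel"
      by (simp add: AE_iff_null_sets)
    with assms(2) show False
      by (auto simp: null_sets_def)
  qed
  then have "{a<..b} \<notin> null_sets (normal_measure \<mu> \<sigma>)"
    by (simp add: normal_measure_def null_sets_density_iff)
  then show ?thesis
    by (auto simp: null_sets_def P.emeasure_eq_measure less_le)
qed

lemma normal_density_le_opposite:
  assumes "\<sigma> > 0" "0 \<le> \<mu> * x"
  shows "normal_density (- \<mu>) \<sigma> x \<le> normal_density \<mu> \<sigma> x"
proof -
  have "(x - \<mu>)\<^sup>2 \<le> (x + \<mu>)\<^sup>2"
    using assms(2) by (simp add: power2_eq_square algebra_simps)
  then show ?thesis
    using assms(1) by (simp add: normal_density_def divide_right_mono)
qed

lemma measure_normal_measure_mono_density: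
  assumes "\<sigma> > 0" "A \<in> sets borel"
    and "\<And>x. x \<in> A \<Longrightarrow> normal_density \<mu> \<sigma> x \<le> normal_density \<nu> \<sigma> x"
  shows "measure (normal_measure \<mu> \<sigma>) A \<le> measure (normal_measure \<nu> \<sigma>) A"
proof -
  interpret P: prob_space "normal_measure \<mu> \<sigma>"
    using assms(1) by (rule prob_space_normal_measure)
  interpret Q: prob_space "normal_measure \<nu> \<sigma>"
    using assms(1) by (rule prob_space_normal_measure)
  have "emeasure (normal_measure \<mu> \<sigma>) A \<le> emeasure (normal_measure \<nu> \<sigma>) A"
    unfolding emeasure_normal_measure[OF assms(2)]
    by (intro nn_integral_mono) (auto simp: indicator_def assms(3))
  then show ?thesis
    by (simp add: P.emeasure_eq_measure Q.emeasure_eq_measure)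
qed

lemma measure_normal_measure_diff_le:
  assumes "\<sigma> > 0" "A \<in> sets borel" "B \<in> sets borel"
    and "\<And>x. x \<in> B \<Longrightarrow> 0 \<le> \<mu> * x" "\<And>x. x \<notin> B \<Longrightarrow> \<mu> * x \<le> 0"
  shows "measure (normal_measure \<mu> \<sigma>) A - measure (normal_measure (- \<mu>) \<sigma>) A
    \<le> measure (normal_measure \<mu> \<sigma>) B - measure (normal_measure (- \<mu>) \<sigma>) B"
proof -
  interpret P: prob_space "normal_measure \<mu> \<sigma>"
    using assms(1) by (rule prob_space_normal_measure)
  interpret Q: prob_space "normal_measure (- \<mu>) \<sigma>"
    using assms(1) by (rule prob_space_normal_measure)
  have "measure (normal_measure \<mu> \<sigma>) (A - B) \<le> measure (normal_measure (- \<mu>) \<sigma>) (A - B)"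
    using assms normal_density_le_opposite[OF assms(1), of "- \<mu>"]
    by (intro measure_normal_measure_mono_density) auto
  moreover have "measure (normal_measure (- \<mu>) \<sigma>) (B - A) \<le> measure (normal_measure \<mu> \<sigma>) (B - A)"
    using assms normal_density_le_opposite[OF assms(1), of \<mu>]
    by (intro measure_normal_measure_mono_density) auto
  ultimately show ?thesis
    using assms(2,3) by (simp add: P.finite_measure_Diff' Q.finite_measure_Diff' Int_commute)
qed

definition std_normal_central_prob :: "real \<Rightarrow> real" where
  "std_normal_central_prob a = measure (normal_measure 0 1) {- a<..a}"

lemma std_normal_central_prob_strict_mono:
  assumes "0 \<le> a" "a < b"
  shows "std_normal_central_prob a < std_normal_central_prob b"
proof -
  interpret P: prob_space "normal_measure 0 1"
    by (simp add: prob_space_normal_measure)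
  have "measure (normal_measure 0 1) {a<..b} \<le> measure (normal_measure 0 1) ({- b<..b} - {- a<..a})"
    using assms by (intro P.finite_measure_mono) auto
  moreover have "measure (normal_measure 0 1) ({- b<..b} - {- a<..a})
      = std_normal_central_prob b - std_normal_central_prob a"
    using assms by (subst P.finite_measure_Diff) (auto simp: std_normal_central_prob_def)
  ultimately show ?thesis
    using measure_normal_measure_interval_pos[of 1 a b 0] assms(2) by simp
qed

lemma std_normal_central_prob_less_iff:
  assumes "0 \<le> a" "0 \<le> b"
  shows "std_normal_central_prob a < std_normal_central_prob b \<longleftrightarrow> a < b"
  using assms std_normal_central_prob_strict_mono
  by (metis linorder_neqE_linordered_idom order_less_asym order_less_irrefl)

lemma measure_normal_measure_diff_Ioi:
  assumes "\<sigma> > 0" "0 \<le> \<mu>"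
  shows "measure (normal_measure \<mu> \<sigma>) {0<..} - measure (normal_measure (- \<mu>) \<sigma>) {0<..}
    = std_normal_central_prob (\<mu> / \<sigma>)"
proof -
  interpret P: prob_space "normal_measure 0 1"
    by (simp add: prob_space_normal_measure)
  define r where "r = \<mu> / \<sigma>"
  have "{y. \<mu> + \<sigma> * y \<in> {0<..}} = {- r<..}" "{y. - \<mu> + \<sigma> * y \<in> {0<..}} = {r<..}"
    using assms(1) by (auto simp: r_def field_simps)
  then have "measure (normal_measure \<mu> \<sigma>) {0<..} - measure (normal_measure (- \<mu>) \<sigma>) {0<..}
      = measure (normal_measure 0 1) {- r<..} - measure (normal_measure 0 1) {r<..}"
    using assms(1) by (simp add: measure_normal_measure_affine[of \<sigma>])
  also have "\<dots> = measure (normal_measure 0 1) ({- r<..} - {r<..})"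
    using assms by (subst P.finite_measure_Diff) (auto simp: r_def)
  also have "{- r<..} - {r<..} = {- r<..r}"
    by auto
  finally show ?thesis
    by (simp add: std_normal_central_prob_def r_def)
qed

lemma normal_bayes_accuracy:
  assumes "\<sigma> > 0"
  shows "(SUP A \<in> sets borel. 1/2 * measure (normal_measure \<mu> \<sigma>) A
            + 1/2 * (1 - measure (normal_measure (- \<mu>) \<sigma>) A))
    = 1/2 + 1/2 * std_normal_central_prob (\<bar>\<mu>\<bar> / \<sigma>)"
proof -
  let ?P = "\<lambda>\<nu> A. measure (normal_measure \<nu> \<sigma>) A"
  obtain B where B: "B \<in> sets borel" "\<And>x. x \<in> B \<Longrightarrow> 0 \<le> \<mu> * x" "\<And>x. x \<notin> B \<Longrightarrow> \<mu> * x \<le> 0"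
    and gain: "?P \<mu> B - ?P (- \<mu>) B = std_normal_central_prob (\<bar>\<mu>\<bar> / \<sigma>)"
  proof (cases "0 \<le> \<mu>")
    case True
    then show ?thesis
      using measure_normal_measure_diff_Ioi[OF assms True]
      by (intro that[of "{0<..}"]) (auto intro: mult_nonneg_nonpos)
  next
    case False
    have compl: "?P \<nu> {..0} = 1 - ?P \<nu> {0<..}" for \<nu>
    proof -
      interpret prob_space "normal_measure \<nu> \<sigma>"
        using assms by (rule prob_space_normal_measure)
      have "{..0} = space (normal_measure \<nu> \<sigma>) - {0::real<..}"
        by auto
      then show ?thesis
        by (simp only:) (rule prob_compl, simp)
    qed
    have "?P \<mu> {..0} - ?P (- \<mu>) {..0} = ?P (- \<mu>) {0<..} - ?P (- (- \<mu>)) {0<..}"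
      by (simp add: compl)
    then show ?thesis
      using measure_normal_measure_diff_Ioi[OF assms, of "- \<mu>"] False
      by (intro that[of "{..0}"]) (auto intro: mult_nonpos_nonpos mult_nonpos_nonneg)
  qed
  have accuracy: "1/2 * ?P \<mu> A + 1/2 * (1 - ?P (- \<mu>) A) = 1/2 + 1/2 * (?P \<mu> A - ?P (- \<mu>) A)" for A
    by (simp add: algebra_simps)
  show ?thesis
    unfolding accuracy
  proof (rule cSup_eq_maximum)
    show "1/2 + 1/2 * std_normal_central_prob (\<bar>\<mu>\<bar> / \<sigma>)
        \<in> (\<lambda>A. 1/2 + 1/2 * (?P \<mu> A - ?P (- \<mu>) A)) ` sets borel"
      using B(1) gain by (intro image_eqI[of _ _ B]) auto
  next
    fix y
    assume "y \<in> (\<lambda>A. 1/2 + 1/2 * (?P \<mu> A - ?P (- \<mu>) A)) ` sets borel"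
    then obtain A where A: "A \<in> sets borel" and "y = 1/2 + 1/2 * (?P \<mu> A - ?P (- \<mu>) A)"
      by blast
    then show "y \<le> 1/2 + 1/2 * std_normal_central_prob (\<bar>\<mu>\<bar> / \<sigma>)"
      using measure_normal_measure_diff_le[OF assms A B] gain by simp
  qed
qed

lemma measure_distributed_normal:
  assumes "distributed M lborel X (\<lambda>x. ennreal (normal_density \<mu> \<sigma> x))" "A \<in> sets borel"
  shows "measure M {\<omega> \<in> space M. X \<omega> \<in> A} = measure (normal_measure \<mu> \<sigma>) A"
proof -
  have "X \<in> measurable M lborel"
    using assms(1) by (rule distributed_measurable)
  then have "measure M {\<omega> \<in> space M. X \<omega> \<in> A} = measure (distr M lborel X) A"
    using assms(2) by (subst measure_distr) (auto simp: vimage_def Int_def conj_commute)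
  then show ?thesis
    by (simp add: distributed_distr_eq_density[OF assms(1)] normal_measure_def)
qed

lemma cond_prob_normal:
  assumes "finite C" "C \<noteq> {}" "A \<in> sets borel"
    and "\<And>i. i \<in> C \<Longrightarrow> distributed M lborel (Z i) (\<lambda>x. ennreal (normal_density \<mu> \<sigma> x))"
  shows "cond_prob M Z C A = measure (normal_measure \<mu> \<sigma>) A"
proof -
  have "(\<Sum>i\<in>C. measure M {\<omega> \<in> space M. Z i \<omega> \<in> A}) = (\<Sum>i\<in>C. measure (normal_measure \<mu> \<sigma>) A)"
    using assms(3,4) by (intro sum.cong) (simp_all add: measure_distributed_normal)
  then show ?thesis
    using assms(1,2) by (simp add: cond_prob_def)
qed

lemma cond_exp_const:
  assumes "finite C" "C \<noteq> {}" "\<And>i. i \<in> C \<Longrightarrow> integral\<^sup>L M (\<lambda>\<omega>. g (Z i \<omega>)) = c"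
  shows "cond_exp M Z C g = c"
  using assms by (simp add: cond_exp_def)

lemma CS_eq_normal:
  assumes "\<sigma> > 0" "finite C0" "C0 \<noteq> {}" "finite C1" "C1 \<noteq> {}"
    and "\<And>i. i \<in> C0 \<Longrightarrow> distributed M lborel (embed X N n w i) (\<lambda>x. ennreal (normal_density \<mu> \<sigma> x))"
    and "\<And>i. i \<in> C1 \<Longrightarrow> distributed M lborel (embed X N n w i) (\<lambda>x. ennreal (normal_density (- \<mu>) \<sigma> x))"
  shows "CS M X N C0 C1 n w = 1/2 + 1/2 * std_normal_central_prob (\<bar>\<mu>\<bar> / \<sigma>)"
  using assms unfolding CS_def normal_bayes_accuracy[OF assms(1), symmetric]
  by (intro SUP_cong) (simp_all add: cond_prob_normal[OF assms(2,3) _ assms(6)] cond_prob_normal[OF assms(4,5) _ assms(7)])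

lemma LCS_eq_normal:
  assumes "prob_space M" "\<sigma> > 0" "finite C0" "C0 \<noteq> {}" "finite C1" "C1 \<noteq> {}"
    and D0: "\<And>i. i \<in> C0 \<Longrightarrow> distributed M lborel (embed X N n w i) (\<lambda>x. ennreal (normal_density \<mu> \<sigma> x))"
    and D1: "\<And>i. i \<in> C1 \<Longrightarrow> distributed M lborel (embed X N n w i) (\<lambda>x. ennreal (normal_density (- \<mu>) \<sigma> x))"
  shows "LCS M X N C0 C1 n w = 4 * (\<bar>\<mu>\<bar> / \<sigma>)\<^sup>2"
proof -
  interpret prob_space M
    by fact
  let ?Z = "embed X N n w"
  have mean0: "cond_exp M ?Z C0 (\<lambda>z. z) = \<mu>" and mean1: "cond_exp M ?Z C1 (\<lambda>z. z) = - \<mu>"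
    using assms normal_distributed_expectation[OF assms(2)] by (auto intro: cond_exp_const)
  have var0: "cond_exp M ?Z C0 (\<lambda>z. (z - \<mu>)\<^sup>2) = \<sigma>\<^sup>2"
    using assms normal_distributed_variance[OF assms(2) D0] normal_distributed_expectation[OF assms(2) D0]
    by (auto intro: cond_exp_const)
  have var1: "cond_exp M ?Z C1 (\<lambda>z. (z - - \<mu>)\<^sup>2) = \<sigma>\<^sup>2"
    using assms normal_distributed_variance[OF assms(2) D1] normal_distributed_expectation[OF assms(2) D1]
    by (auto intro: cond_exp_const)
  show ?thesis
    using assms(2) unfolding LCS_def Let_def mean0 mean1 var0 var1
    by (simp add: power_divide power2_eq_square field_simps)
qed

lemma (in prob_space) distributed_weighted_sum_indep_normal:
  assumes "finite I" "indep_vars (\<lambda>_. borel) X I" "\<sigma> > 0" "\<exists>j\<in>I. c j \<noteq> 0"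
    and "\<And>j. j \<in> I \<Longrightarrow> distributed M lborel (X j) (\<lambda>x. ennreal (normal_density (\<mu> j) \<sigma> x))"
  shows "distributed M lborel (\<lambda>\<omega>. \<Sum>j\<in>I. c j * X j \<omega>)
    (\<lambda>x. ennreal (normal_density (\<Sum>j\<in>I. c j * \<mu> j) (\<sigma> * sqrt (\<Sum>j\<in>I. (c j)\<^sup>2)) x))"
proof -
  \<comment> \<open>\<open>sum_indep_normal\<close> needs positive standard deviations, so zero weights are dropped first.\<close>
  define J where "J = {j \<in> I. c j \<noteq> 0}"
  have J: "finite J" "J \<noteq> {}" "J \<subseteq> I"
    using assms(1,4) by (auto simp: J_def)
  have sum_J: "(\<Sum>j\<in>I. c j * f j) = (\<Sum>j\<in>J. c j * f j)" for f :: "'b \<Rightarrow> real"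
    using assms(1) by (intro sum.mono_neutral_right) (auto simp: J_def)
  have variance: "(\<Sum>j\<in>J. (\<bar>c j\<bar> * \<sigma>)\<^sup>2) = \<sigma>\<^sup>2 * (\<Sum>j\<in>I. (c j)\<^sup>2)"
  proof -
    have "(\<Sum>j\<in>J. (\<bar>c j\<bar> * \<sigma>)\<^sup>2) = (\<Sum>j\<in>J. \<sigma>\<^sup>2 * (c j)\<^sup>2)"
      by (simp add: power_mult_distrib mult.commute)
    also have "\<dots> = \<sigma>\<^sup>2 * (\<Sum>j\<in>I. (c j)\<^sup>2)"
      using sum_J[of c] by (simp add: sum_distrib_left[symmetric] power2_eq_square)
    finally show ?thesis .
  qed
  have "indep_vars (\<lambda>_. borel) (\<lambda>j \<omega>. c j * X j \<omega>) J"
    using indep_vars_subset[OF assms(2) J(3)] by (rule indep_vars_compose2) auto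
  moreover have "distributed M lborel (\<lambda>\<omega>. c j * X j \<omega>)
      (\<lambda>x. ennreal (normal_density (c j * \<mu> j) (\<bar>c j\<bar> * \<sigma>) x))" if "j \<in> J" for j
    using normal_density_affine[OF assms(5) assms(3), of j "c j" 0] that by (auto simp: J_def)
  ultimately have "distributed M lborel (\<lambda>\<omega>. \<Sum>j\<in>J. c j * X j \<omega>)
      (\<lambda>x. ennreal (normal_density (\<Sum>j\<in>J. c j * \<mu> j) (sqrt (\<Sum>j\<in>J. (\<bar>c j\<bar> * \<sigma>)\<^sup>2)) x))"
    using J assms(3) by (intro sum_indep_normal) (auto simp: J_def)
  then show ?thesis
    using assms(3) by (simp add: sum_J variance real_sqrt_mult)
qed

definition class_sign :: "'v set \<Rightarrow> 'v \<Rightarrow> real" where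
  "class_sign C j = (if j \<in> C then 1 else - 1)"

lemma sum_class_sign_neighbours:
  assumes "finite V" "C0 \<inter> C1 = {}" "C0 \<union> C1 = V" "i \<in> V" "N \<subseteq> V"
    and "card N = n" "card (N \<inter> (if i \<in> C0 then C0 else C1)) = n0"
  shows "(\<Sum>j\<in>N. class_sign C0 j) = class_sign C0 i * (2 * real n0 - real n)"
proof -
  define K where "K = (if i \<in> C0 then C0 else C1)"
  have fin: "finite N"
    using assms(1,5) by (rule finite_subset[rotated])
  have sign: "class_sign C0 j = (if j \<in> K then class_sign C0 i else - class_sign C0 i)" if "j \<in> N" for j
    using that assms(2-5) by (auto simp: K_def class_sign_def)
  have "card (N - K) = n - n0"
    using assms(6,7) fin by (simp add: K_def card_Diff_subset_Int)
  moreover have "n0 \<le> n"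
    using assms(6,7) fin by (metis K_def card_mono Int_lower1)
  moreover have "(\<Sum>j\<in>N. class_sign C0 j) = (\<Sum>j\<in>N \<inter> K. class_sign C0 i) + (\<Sum>j\<in>N - K. - class_sign C0 i)"
    unfolding sum.Int_Diff[OF fin, of _ K] by (intro arg_cong2[where f="(+)"] sum.cong) (auto simp: sign)
  ultimately show ?thesis
    using assms(7) by (simp add: K_def of_nat_diff algebra_simps)
qed

lemma sum_convolution_weights:
  fixes f :: "'a \<Rightarrow> 'b::semiring_0"
  assumes "finite F" "i \<notin> F"
  shows "(\<Sum>j\<in>insert i F. (if j = i then a else b) * f j) = a * f i + b * (\<Sum>j\<in>F. f j)"
proof -
  have "(\<Sum>j\<in>insert i F. (if j = i then a else b) * f j) = a * f i + (\<Sum>j\<in>F. (if j = i then a else b) * f j)"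
    using assms by simp
  also have "(\<Sum>j\<in>F. (if j = i then a else b) * f j) = (\<Sum>j\<in>F. b * f j)"
    using assms(2) by (intro sum.cong) auto
  finally show ?thesis
    by (simp add: sum_distrib_left)
qed

lemma embed_distributed:
  fixes M :: "'a measure" and X :: "'v \<Rightarrow> 'a \<Rightarrow> real"
  assumes "prob_space M" "\<sigma> > 0" "finite V" "C0 \<inter> C1 = {}" "C0 \<union> C1 = V"
    and "prob_space.indep_vars M (\<lambda>_. borel) X V"
    and "\<And>j. j \<in> V \<Longrightarrow> distributed M lborel (X j) (\<lambda>x. ennreal (normal_density (class_sign C0 j * \<mu>) \<sigma> x))"
    and "n \<ge> 1" "i \<in> V" "N i \<subseteq> V - {i}" "card (N i) = n"
    and "card (N i \<inter> (if i \<in> C0 then C0 else C1)) = n0"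
  shows "distributed M lborel (embed X N n w i)
    (\<lambda>x. ennreal (normal_density (class_sign C0 i * \<mu> * ((1 - w) + w * (2 * real n0 - real n) / real n))
      (\<sigma> * sqrt ((1 - w)\<^sup>2 + w\<^sup>2 / real n)) x))"
proof -
  interpret prob_space M
    by fact
  define T where "T = insert i (N i)"
  define c where "c j = (if j = i then 1 - w else w / real n)" for j
  have fin: "finite (N i)" and i_notin: "i \<notin> N i"
    using assms(3,10) finite_subset by auto
  note sum_T = sum_convolution_weights[OF fin i_notin, where a="1 - w" and b="w / real n", folded T_def c_def]
  have T: "finite T" "T \<subseteq> V"
    using fin assms(9,10) by (auto simp: T_def)
  have "\<exists>j\<in>T. c j \<noteq> 0"
  proof (cases "w = 1")
    case True
    obtain j where "j \<in> N i"
      using assms(8,11) by fastforce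
    with True assms(8) i_notin show ?thesis
      by (intro bexI[of _ j]) (auto simp: c_def T_def)
  qed (auto simp: c_def T_def)
  then have "distributed M lborel (\<lambda>\<omega>. \<Sum>j\<in>T. c j * X j \<omega>)
      (\<lambda>x. ennreal (normal_density (\<Sum>j\<in>T. c j * (class_sign C0 j * \<mu>)) (\<sigma> * sqrt (\<Sum>j\<in>T. (c j)\<^sup>2)) x))"
    using T assms(2,7) indep_vars_subset[OF assms(6) T(2)]
    by (intro distributed_weighted_sum_indep_normal) auto
  moreover have "embed X N n w i = (\<lambda>\<omega>. \<Sum>j\<in>T. c j * X j \<omega>)"
    by (simp add: fun_eq_iff embed_def sum_T)
  moreover have "(\<Sum>j\<in>T. c j * (class_sign C0 j * \<mu>))
      = class_sign C0 i * \<mu> * ((1 - w) + w * (2 * real n0 - real n) / real n)"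
  proof -
    have "(\<Sum>j\<in>N i. class_sign C0 j * \<mu>) = class_sign C0 i * (2 * real n0 - real n) * \<mu>"
      using assms(10) sum_class_sign_neighbours[OF assms(3-5,9) _ assms(11,12)]
      by (auto simp: sum_distrib_right[symmetric])
    then show ?thesis
      unfolding sum_T using assms(8) by (simp only:) (simp add: field_simps)
  qed
  moreover have "(\<Sum>j\<in>T. (c j)\<^sup>2) = (1 - w)\<^sup>2 + w\<^sup>2 / real n"
  proof -
    have "(\<Sum>j\<in>T. (c j)\<^sup>2) = (\<Sum>j\<in>T. (if j = i then (1 - w)\<^sup>2 else (w / real n)\<^sup>2) * 1)"
      by (intro sum.cong) (auto simp: c_def)
    also have "\<dots> = (1 - w)\<^sup>2 + (w / real n)\<^sup>2 * real n"
      unfolding T_def sum_convolution_weights[OF fin i_notin] using assms(11) by simp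
    finally show ?thesis
      using assms(8) by (simp add: power2_eq_square)
  qed
  ultimately show ?thesis
    by simp
qed

definition embed_snr :: "real \<Rightarrow> real \<Rightarrow> nat \<Rightarrow> nat \<Rightarrow> real \<Rightarrow> real" where
  "embed_snr \<mu> \<sigma> n n0 w =
    \<bar>\<mu> * ((1 - w) + w * (2 * real n0 - real n) / real n)\<bar> / (\<sigma> * sqrt ((1 - w)\<^sup>2 + w\<^sup>2 / real n))"

lemma CS_LCS_eq_embed_snr:
  fixes M :: "'a measure" and X :: "'v \<Rightarrow> 'a \<Rightarrow> real"
  assumes "prob_space M" "\<sigma> > 0"
    and "finite V" "C0 \<noteq> {}" "C1 \<noteq> {}" "C0 \<inter> C1 = {}" "C0 \<union> C1 = V"
    and "prob_space.indep_vars M (\<lambda>_. borel) X V"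
    and "\<And>i. i \<in> C0 \<Longrightarrow> distributed M lborel (X i) (\<lambda>x. ennreal (normal_density \<mu> \<sigma> x))"
    and "\<And>i. i \<in> C1 \<Longrightarrow> distributed M lborel (X i) (\<lambda>x. ennreal (normal_density (- \<mu>) \<sigma> x))"
    and "n \<ge> 1"
    and "\<And>i. i \<in> V \<Longrightarrow> N i \<subseteq> V - {i}"
    and "\<And>i. i \<in> V \<Longrightarrow> card (N i) = n"
    and "\<And>i. i \<in> V \<Longrightarrow> card (N i \<inter> (if i \<in> C0 then C0 else C1)) = n0"
  shows "CS M X N C0 C1 n w = 1/2 + 1/2 * std_normal_central_prob (embed_snr \<mu> \<sigma> n n0 w)"
    and "LCS M X N C0 C1 n w = 4 * (embed_snr \<mu> \<sigma> n n0 w)\<^sup>2"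
proof -
  define m where "m = \<mu> * ((1 - w) + w * (2 * real n0 - real n) / real n)"
  define s where "s = \<sigma> * sqrt ((1 - w)\<^sup>2 + w\<^sup>2 / real n)"
  have fin: "finite C0" "finite C1"
    using assms(3,7) by (auto intro: finite_subset)
  have "(1 - w)\<^sup>2 + w\<^sup>2 / real n > 0"
    using assms(11) by (cases "w = 0") (auto intro: add_nonneg_pos)
  then have s: "s > 0"
    using assms(2) by (simp add: s_def)
  have "distributed M lborel (X j) (\<lambda>x. ennreal (normal_density (class_sign C0 j * \<mu>) \<sigma> x))"
    if "j \<in> V" for j
    using that assms(6,7,9,10) by (auto simp: class_sign_def)
  then have embed_dist: "distributed M lborel (embed X N n w i)
      (\<lambda>x. ennreal (normal_density (class_sign C0 i * m) s x))" if "i \<in> V" for i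
    using embed_distributed[where N=N and i=i, OF assms(1-3,6,7,8) _ assms(11) that assms(12-14)[OF that]]
    by (simp add: m_def s_def mult.assoc)
  have D0: "distributed M lborel (embed X N n w i) (\<lambda>x. ennreal (normal_density m s x))" if "i \<in> C0" for i
    using that embed_dist[of i] assms(7) by (auto simp: class_sign_def)
  have D1: "distributed M lborel (embed X N n w i) (\<lambda>x. ennreal (normal_density (- m) s x))" if "i \<in> C1" for i
  proof -
    have "i \<notin> C0" "i \<in> V"
      using that assms(6,7) by auto
    then show ?thesis
      using embed_dist[of i] by (simp add: class_sign_def)
  qed
  show "CS M X N C0 C1 n w = 1/2 + 1/2 * std_normal_central_prob (embed_snr \<mu> \<sigma> n n0 w)"
    using CS_eq_normal[OF s fin(1) assms(4) fin(2) assms(5) D0 D1] by (simp add: embed_snr_def m_def s_def)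
  show "LCS M X N C0 C1 n w = 4 * (embed_snr \<mu> \<sigma> n n0 w)\<^sup>2"
    using LCS_eq_normal[OF assms(1) s fin(1) assms(4) fin(2) assms(5) D0 D1] by (simp add: embed_snr_def m_def s_def)
qed

theorem theorem1:
  fixes M :: "'a measure" and X :: "'v \<Rightarrow> 'a \<Rightarrow> real"
    and V C0 C1 :: "'v set" and N :: "'v \<Rightarrow> 'v set"
    and \<mu> \<sigma> w w' :: real and n n0 :: nat
  assumes "prob_space M"
    and "\<sigma> > 0"
    and "finite V" and "C0 \<noteq> {}" and "C1 \<noteq> {}" and "C0 \<inter> C1 = {}" and "C0 \<union> C1 = V"
    and "card C0 = card C1"
    and "prob_space.indep_vars M (\<lambda>_. borel) X V"
    and "\<And>i. i \<in> C0 \<Longrightarrow> distributed M lborel (X i) (\<lambda>x. ennreal (normal_density \<mu> \<sigma> x))"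
    and "\<And>i. i \<in> C1 \<Longrightarrow> distributed M lborel (X i) (\<lambda>x. ennreal (normal_density (- \<mu>) \<sigma> x))"
    and "n \<ge> 1" and "n0 \<le> n"
    and "\<And>i. i \<in> V \<Longrightarrow> N i \<subseteq> V - {i}"
    and "\<And>i. i \<in> V \<Longrightarrow> card (N i) = n"
    and "\<And>i. i \<in> V \<Longrightarrow> card (N i \<inter> (if i \<in> C0 then C0 else C1)) = n0"
    and "w \<in> {0..1}" and "w' \<in> {0..1}"
    and "n0 = n \<or>
         (w \<in> {max ((real n - 2 * real n0) / (2 * real n - 2 * real n0)) 0 .. 1} \<and>
          w' \<in> {max ((real n - 2 * real n0) / (2 * real n - 2 * real n0)) 0 .. 1})"
  shows "CS M X N C0 C1 n w > CS M X N C0 C1 n w' \<longleftrightarrow>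
         LCS M X N C0 C1 n w > LCS M X N C0 C1 n w'"
proof -
  note separability = CS_LCS_eq_embed_snr[OF assms(1-7,9-12,14-16)]
  let ?r = "embed_snr \<mu> \<sigma> n n0 w" and ?r' = "embed_snr \<mu> \<sigma> n n0 w'"
  have "?r \<ge> 0" "?r' \<ge> 0"
    using assms(2) by (simp_all add: embed_snr_def)
  then have "?r' < ?r \<longleftrightarrow> 4 * ?r'\<^sup>2 < 4 * ?r\<^sup>2"
    using power_mono_iff[of ?r ?r' 2] by (auto simp: not_le[symmetric])
  then show ?thesis
    using std_normal_central_prob_less_iff[OF \<open>?r' \<ge> 0\<close> \<open>?r \<ge> 0\<close>] by (simp add: separability)
qed

end
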